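(* Let $G$ be a graph, $k,\ell\ge1$, $S$ an independent set of size $k$, and $J_0=S,J_1,\dots,J_\ell$ independent sets of $G$. Define $\mathcal{C}_0=\{\{(S,k)\}\}$ and, for $i\in\{1,\dots,\ell\}$, let $\mathcal{C}_i$ contain, for every $C\in\mathcal{C}_{i-1}$ and every constraint $(X,b)\in C$, the constraint set $C'$ consisting of: $(N(X)\cap J_i,1)$; $(X\cap J_i,b-1)$ if $b\ge2$ (nothing if $b=1$); and $(X'\cap J_i,b')$ for every other constraint $(X',b')\in C$. Let $i\in\{0,\dots,\ell\}$ and let $Z\subseteq J_i$ be an independent set of size $k$. If there is a sequence $S=I'_0,I'_1,\dots,I'_i=Z$ of independent sets of size $k$ such that $I'_p\subseteq J_p$ for every $p\in\{0,\dots,i\}$ and each $I'_{p+1}=(I'_p\setminus\{u\})\cup\{v\}$ for some $u\in I'_p$, $v\notin I'_p$ with $\{u,v\}\in E(G)$, then $Z$ satisfies at least one constraint set in $\mathcal{C}_i$.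
   Context: A constraint is a pair $(X,b)$ with $X\subseteq V(G)$ and $b$ a positive integer. A set $Z\subseteq V(G)$ satisfies $(X,b)$ if $|Z\cap X|=b$, and satisfies a constraint set $C$ if it satisfies every constraint in $C$. For $X\subseteq V(G)$, $N(X)=\{v\notin X: v\text{ adjacent to some }u\in X\}$. *)

theory Defs
  imports Main
begin

definition simple_graph :: "'a set \<Rightarrow> ('a \<Rightarrow> 'a \<Rightarrow> bool) \<Rightarrow> bool" where
  "simple_graph V E \<longleftrightarrow> finite V \<and> (\<forall>u v. E u v \<longrightarrow> u \<in> V \<and> v \<in> V)
     \<and> (\<forall>u v. E u v \<longrightarrow> E v u) \<and> (\<forall>u. \<not> E u u)"

definition indep_set :: "'a set \<Rightarrow> ('a \<Rightarrow> 'a \<Rightarrow> bool) \<Rightarrow> 'a set \<Rightarrow> bool" where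
  "indep_set V E I \<longleftrightarrow> I \<subseteq> V \<and> (\<forall>u\<in>I. \<forall>v\<in>I. \<not> E u v)"

definition nbhd :: "'a set \<Rightarrow> ('a \<Rightarrow> 'a \<Rightarrow> bool) \<Rightarrow> 'a set \<Rightarrow> 'a set" where
  "nbhd V E X = {v \<in> V. v \<notin> X \<and> (\<exists>u\<in>X. E u v)}"

definition satisfies_constraint :: "'a set \<Rightarrow> 'a set \<times> nat \<Rightarrow> bool" where
  "satisfies_constraint Z c \<longleftrightarrow> card (Z \<inter> fst c) = snd c"

definition satisfies_cset :: "'a set \<Rightarrow> ('a set \<times> nat) set \<Rightarrow> bool" where
  "satisfies_cset Z C \<longleftrightarrow> (\<forall>c\<in>C. satisfies_constraint Z c)"

definition cstep :: "'a set \<Rightarrow> ('a \<Rightarrow> 'a \<Rightarrow> bool) \<Rightarrow> 'a set \<Rightarrow> ('a set \<times> nat) set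
    \<Rightarrow> ('a set \<times> nat) set set" where
  "cstep V E Ji C = (\<lambda>(X, b). {(nbhd V E X \<inter> Ji, 1)}
        \<union> (if b \<ge> 2 then {(X \<inter> Ji, b - 1)} else {})
        \<union> {(X' \<inter> Ji, b') | X' b'. (X', b') \<in> C \<and> (X', b') \<noteq> (X, b)}) ` C"

fun cfam :: "'a set \<Rightarrow> ('a \<Rightarrow> 'a \<Rightarrow> bool) \<Rightarrow> 'a set \<Rightarrow> nat \<Rightarrow> (nat \<Rightarrow> 'a set) \<Rightarrow> nat
    \<Rightarrow> ('a set \<times> nat) set set" where
  "cfam V E S k J 0 = {{(S, k)}}"
| "cfam V E S k J (Suc i) = (\<Union>C\<in>cfam V E S k J i. cstep V E (J (Suc i)) C)"

end

theory Submission
  imports Defs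
begin

text \<open>
  Induct along the reconfiguration sequence, keeping a constraint set \<open>C \<in> \<C>\<^sub>p\<close> that
  \<open>I'\<^sub>p\<close> satisfies, whose sets lie in \<open>J\<^sub>p\<close>, and such that every token of \<open>I'\<^sub>p\<close> lies in
  exactly one of its sets. When the token \<open>u\<close> slides to \<open>v\<close>, branch on the unique
  constraint \<open>(X, b)\<close> containing \<open>u\<close>: the new token \<open>v\<close> is accounted for by
  \<open>(N(X) \<inter> J\<^sub>p\<^sub>+\<^sub>1, 1)\<close>, the remaining \<open>b - 1\<close> tokens of \<open>X\<close> by \<open>(X \<inter> J\<^sub>p\<^sub>+\<^sub>1, b - 1)\<close>, and
  every other constraint keeps its tokens. Independence of \<open>J\<^sub>p\<close> makes \<open>v \<notin> J\<^sub>p\<close> and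
  keeps the tokens of \<open>I'\<^sub>p\<close> out of \<open>N(X)\<close>, which is what keeps the tokens separated.
\<close>

definition tracks :: "'a set \<Rightarrow> 'a set \<Rightarrow> ('a set \<times> nat) set \<Rightarrow> bool" where
  "tracks J A C \<longleftrightarrow> satisfies_cset A C \<and> (\<forall>c\<in>C. fst c \<subseteq> J) \<and> (\<forall>w\<in>A. \<exists>!c\<in>C. w \<in> fst c)"

definition cstep_at :: "'a set \<Rightarrow> ('a \<Rightarrow> 'a \<Rightarrow> bool) \<Rightarrow> 'a set \<Rightarrow> ('a set \<times> nat) set
    \<Rightarrow> 'a set \<Rightarrow> nat \<Rightarrow> ('a set \<times> nat) set" where
  "cstep_at V E Jq C X b = {(nbhd V E X \<inter> Jq, 1)}
        \<union> (if b \<ge> 2 then {(X \<inter> Jq, b - 1)} else {})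
        \<union> {(X' \<inter> Jq, b') | X' b'. (X', b') \<in> C \<and> (X', b') \<noteq> (X, b)}"

lemma cstep_at_in_cstep: "(X, b) \<in> C \<Longrightarrow> cstep_at V E Jq C X b \<in> cstep V E Jq C"
  unfolding cstep_def cstep_at_def by (rule image_eqI[where x = "(X, b)"]) auto

lemma cstep_atE [consumes 1, case_names nbhd shrunk other]:
  assumes "c \<in> cstep_at V E Jq C X b"
  obtains "c = (nbhd V E X \<inter> Jq, 1)"
  | "b \<ge> 2" "c = (X \<inter> Jq, b - 1)"
  | X' b' where "c = (X' \<inter> Jq, b')" "(X', b') \<in> C" "(X', b') \<noteq> (X, b)"
  using assms unfolding cstep_at_def by (auto split: if_splits)

context
  fixes V :: "'a set" and E :: "'a \<Rightarrow> 'a \<Rightarrow> bool" and Jp Jq A :: "'a set"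
    and C :: "('a set \<times> nat) set" and u v :: 'a and X :: "'a set" and b :: nat
  assumes Jp: "indep_set V E Jp" and A: "A \<subseteq> Jp" "finite A" and tr: "tracks Jp A C"
    and slide: "u \<in> A" "E u v" "v \<in> V" "A - {u} \<union> {v} \<subseteq> Jq"
    and Xb: "(X, b) \<in> C" "u \<in> X"
begin

private lemma X_sub: "X \<subseteq> Jp"
  using tr Xb unfolding tracks_def by fastforce

private lemma v_notin_Jp: "v \<notin> Jp"
  using Jp A slide unfolding indep_set_def by blast

private lemma v_notin_constraints: "c \<in> C \<Longrightarrow> v \<notin> fst c"
  using tr v_notin_Jp unfolding tracks_def by blast

private lemma v_in_nbhd: "v \<in> nbhd V E X"
  using slide Xb X_sub v_notin_Jp unfolding nbhd_def by blast

private lemma tokens_notin_nbhd: "w \<in> A \<Longrightarrow> w \<notin> nbhd V E X"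
  using Jp A X_sub unfolding indep_set_def nbhd_def by blast

private lemma constraint_of_u: "c \<in> C \<Longrightarrow> u \<in> fst c \<Longrightarrow> c = (X, b)"
  using tr slide(1) Xb unfolding tracks_def by fastforce

private lemma constraint_of_token: "c \<in> C \<Longrightarrow> c' \<in> C \<Longrightarrow> w \<in> A \<Longrightarrow> w \<in> fst c \<Longrightarrow> w \<in> fst c' \<Longrightarrow> c = c'"
  using tr unfolding tracks_def by blast

private lemma card_A_X: "card (A \<inter> X) = b"
  using tr Xb unfolding tracks_def satisfies_cset_def satisfies_constraint_def by auto

private lemma satisfies_cstep_at: "satisfies_cset (A - {u} \<union> {v}) (cstep_at V E Jq C X b)"
  unfolding satisfies_cset_def satisfies_constraint_def
proof
  fix c assume "c \<in> cstep_at V E Jq C X b"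
  then show "card ((A - {u} \<union> {v}) \<inter> fst c) = snd c"
  proof (cases rule: cstep_atE)
    case nbhd
    have "(A - {u} \<union> {v}) \<inter> (nbhd V E X \<inter> Jq) = {v}"
      using v_in_nbhd tokens_notin_nbhd slide by blast
    then show ?thesis using nbhd by simp
  next
    case shrunk
    have "(A - {u} \<union> {v}) \<inter> (X \<inter> Jq) = A \<inter> X - {u}"
      using slide X_sub v_notin_Jp by blast
    then show ?thesis using shrunk card_A_X A(2) slide(1) Xb(2) by simp
  next
    case (other X' b')
    have "(A - {u} \<union> {v}) \<inter> (X' \<inter> Jq) = A \<inter> X'"
      using other constraint_of_u v_notin_constraints slide by fastforce
    then show ?thesis
      using other tr unfolding tracks_def satisfies_cset_def satisfies_constraint_def by fastforce
  qed
qed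

private lemma new_token_separated: "\<exists>!c\<in>cstep_at V E Jq C X b. v \<in> fst c"
proof (rule ex1I[where a = "(nbhd V E X \<inter> Jq, 1)"])
  show "(nbhd V E X \<inter> Jq, 1) \<in> cstep_at V E Jq C X b \<and> v \<in> fst (nbhd V E X \<inter> Jq, 1)"
    using v_in_nbhd slide unfolding cstep_at_def by auto
next
  fix c assume c: "c \<in> cstep_at V E Jq C X b \<and> v \<in> fst c"
  then have "c \<in> cstep_at V E Jq C X b" by blast
  then show "c = (nbhd V E X \<inter> Jq, 1)"
  proof (cases rule: cstep_atE)
    case shrunk
    then show ?thesis using c Xb(1) v_notin_constraints by fastforce
  next
    case (other X' b')
    then show ?thesis using c v_notin_constraints by fastforce
  qed
qed

private lemma old_token_separated:
  assumes w: "w \<in> A" "w \<noteq> u"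
  shows "\<exists>!c\<in>cstep_at V E Jq C X b. w \<in> fst c"
proof -
  obtain X0 b0 where c0: "(X0, b0) \<in> C" "w \<in> X0"
    using tr w unfolding tracks_def by fastforce
  have wJq: "w \<in> Jq" using w slide by blast
  define c' where "c' = (X0 \<inter> Jq, if (X0, b0) = (X, b) then b - 1 else b0)"
  show ?thesis
  proof (rule ex1I[where a = c'])
    have "b \<ge> 2" if "(X0, b0) = (X, b)"
    proof -
      have "{u, w} \<subseteq> A \<inter> X" using that c0 w slide Xb by auto
      then have "card {u, w} \<le> b" using card_A_X A(2) by (metis card_mono finite_Int)
      then show ?thesis using w(2) by simp
    qed
    then show "c' \<in> cstep_at V E Jq C X b \<and> w \<in> fst c'"
      using c0 wJq unfolding c'_def cstep_at_def by auto
  next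
    fix c assume c: "c \<in> cstep_at V E Jq C X b \<and> w \<in> fst c"
    then have "c \<in> cstep_at V E Jq C X b" by blast
    then show "c = c'"
    proof (cases rule: cstep_atE)
      case nbhd
      then show ?thesis using c w tokens_notin_nbhd by auto
    next
      case shrunk
      then have "(X0, b0) = (X, b)" using constraint_of_token[OF c0(1) Xb(1) w(1)] c c0 by auto
      then show ?thesis using shrunk unfolding c'_def by simp
    next
      case (other X' b')
      then have "(X0, b0) = (X', b')" using constraint_of_token[OF c0(1) _ w(1)] c c0 by auto
      then show ?thesis using other unfolding c'_def by auto
    qed
  qed
qed

lemma tracks_cstep_at: "tracks Jq (A - {u} \<union> {v}) (cstep_at V E Jq C X b)"
  unfolding tracks_def
  using satisfies_cstep_at new_token_separated old_token_separated
  by (auto simp: cstep_at_def)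

end

lemma tracks_slide:
  assumes "indep_set V E Jp" "A \<subseteq> Jp" "finite A" "tracks Jp A C"
    and "u \<in> A" "E u v" "v \<in> V" "A - {u} \<union> {v} \<subseteq> Jq"
  shows "\<exists>C'\<in>cstep V E Jq C. tracks Jq (A - {u} \<union> {v}) C'"
proof -
  obtain X b where "(X, b) \<in> C" "u \<in> X"
    using assms(4,5) unfolding tracks_def by fastforce
  then show ?thesis
    using tracks_cstep_at[OF assms] cstep_at_in_cstep by blast
qed

theorem lemma3p6:
  fixes V :: "'a set" and E :: "'a \<Rightarrow> 'a \<Rightarrow> bool"
    and S Z :: "'a set" and J I' :: "nat \<Rightarrow> 'a set" and k l i :: nat
  assumes "simple_graph V E"
    and "k \<ge> 1" and "l \<ge> 1"
    and "indep_set V E S" and "card S = k"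
    and "J 0 = S" and "\<forall>p\<le>l. indep_set V E (J p)"
    and "i \<le> l"
    and "Z \<subseteq> J i" and "indep_set V E Z" and "card Z = k"
    and "I' 0 = S" and "I' i = Z"
    and "\<forall>p\<le>i. indep_set V E (I' p) \<and> card (I' p) = k \<and> I' p \<subseteq> J p"
    and "\<forall>p<i. \<exists>u\<in>I' p. \<exists>v. v \<notin> I' p \<and> E u v \<and> I' (Suc p) = (I' p - {u}) \<union> {v}"
  shows "\<exists>C\<in>cfam V E S k J i. satisfies_cset Z C"
proof -
  have "\<exists>C\<in>cfam V E S k J p. tracks (J p) (I' p) C" if "p \<le> i" for p
    using that
  proof (induction p)
    case 0
    then show ?case using assms(5,6,12) by (auto simp: tracks_def satisfies_cset_def satisfies_constraint_def)
  next
    case (Suc p)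
    then obtain C where C: "C \<in> cfam V E S k J p" "tracks (J p) (I' p) C" by auto
    obtain u v where uv: "u \<in> I' p" "E u v" "I' (Suc p) = I' p - {u} \<union> {v}"
      using assms(15) Suc.prems by (meson Suc_le_lessD)
    have Ip: "I' p \<subseteq> J p" "finite (I' p)" and Iq: "I' (Suc p) \<subseteq> J (Suc p)"
      using assms(1,14) Suc.prems finite_subset unfolding simple_graph_def indep_set_def
      by (meson Suc_leD)+
    have "indep_set V E (J p)" using assms(7,8) Suc.prems by simp
    moreover have "v \<in> V" using assms(1) uv(2) unfolding simple_graph_def by blast
    ultimately have "\<exists>C'\<in>cstep V E (J (Suc p)) C. tracks (J (Suc p)) (I' (Suc p)) C'"
      using tracks_slide[where E = E, OF _ Ip C(2) uv(1,2)] Iq uv(3) by simp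
    then show ?case using C(1) by auto
  qed
  from this[of i] show ?thesis using assms(13) by (auto simp: tracks_def)
qed

end
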